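(* Let $X$ be a separable metrizable space with $\operatorname{card}(X)>1$, let $S$ be a ubiquitously dense subset of $X$, and put $\kappa=\operatorname{card}(S)$. Then there exists a family $\{A(\alpha)\}_{\alpha<\kappa}$ of subsets of $X$ such that: (1) each $A(\alpha)$ is countable; (2) each $A(\alpha)$ is dense in $X$; (3) $A(\alpha)\cap A(\beta)=\emptyset$ whenever $\alpha\neq\beta$; (4) $S=\bigcup_{\alpha<\kappa}A(\alpha)$.
   Context: A subset $S$ of a topological space $X$ is ubiquitously dense if $\operatorname{card}(U\cap S)=\operatorname{card}(S)$ for every non-empty open subset $U$ of $X$. Cardinals are identified with initial ordinals, so $\alpha<\kappa$ ranges over ordinals less than $\kappa$. *)

theory Defs
  imports "HOL-Analysis.Analysis" "HOL-Library.Equipollence"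
begin

definition ubiquitously_dense :: "'a topology \<Rightarrow> 'a set \<Rightarrow> bool" where
  "ubiquitously_dense X S \<longleftrightarrow> S \<subseteq> topspace X \<and>
     (\<forall>U. openin X U \<and> U \<noteq> {} \<longrightarrow> U \<inter> S \<approx> S)"

end

theory Submission
  imports Defs
begin

text \<open>Take a countable base \<open>\<B>\<close> of non-empty open sets. Ubiquitous density makes every
  \<open>V \<inter> S\<close> with \<open>V \<in> \<B>\<close> as large as \<open>S\<close>, and \<open>S\<close> is infinite, so \<open>|S \<times> \<B>| = |S|\<close> and a
  transfinite recursion picks injectively a point \<open>p (\<alpha>, V) \<in> V \<inter> S\<close> for all \<open>\<alpha> \<in> S\<close>,
  \<open>V \<in> \<B>\<close>. For fixed \<open>\<alpha>\<close> these points form a countable set meeting every basic open set,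
  hence a dense one; distinct \<open>\<alpha>\<close> give disjoint sets, and each point of \<open>S\<close> never picked
  is added to the set it indexes. The family is indexed by \<open>S\<close> itself: \<open>Field |S| = S\<close>.\<close>

unbundle cardinal_syntax

text \<open>The balls of radii \<open>1 / Suc m\<close> around the points of a countable dense set form a
  countable base.\<close>
lemma separable_metrizable_imp_second_countable:
  assumes "separable_space X" "metrizable_space X"
  shows "second_countable X"
proof -
  obtain M d where "Metric_space M d" and X_eq: "X = Metric_space.mtopology M d"
    using \<open>metrizable_space X\<close> unfolding metrizable_space_def by blast
  interpret Metric_space M d by fact
  obtain D where "countable D" "D \<subseteq> M" and dense: "mtopology closure_of D = M"
    using \<open>separable_space X\<close> unfolding separable_space_def X_eq by auto
  define \<B> where "\<B> = (\<lambda>(y, m::nat). mball y (1 / Suc m)) ` (D \<times> UNIV)"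
  have "\<exists>V\<in>\<B>. x \<in> V \<and> V \<subseteq> U" if "openin mtopology U" "x \<in> U" for U x
  proof -
    obtain r where "r > 0" "mball x r \<subseteq> U" "x \<in> M"
      using \<open>openin mtopology U\<close> \<open>x \<in> U\<close> openin_mtopology by blast
    obtain m :: nat where m: "1 / Suc m < r / 2"
      using reals_Archimedean[of "r / 2"] \<open>r > 0\<close> by (auto simp: field_simps)
    have "x \<in> mtopology closure_of D" "x \<in> mball x (1 / Suc m)"
      using dense \<open>x \<in> M\<close> by simp_all
    then obtain y where "y \<in> D" "y \<in> mball x (1 / Suc m)"
      unfolding in_closure_of by (meson openin_mball)
    then have "x \<in> mball y (1 / Suc m)" by (auto simp: commute)
    moreover have "mball y (1 / Suc m) \<subseteq> mball x r"
      using \<open>y \<in> mball x (1 / Suc m)\<close> m by (intro mball_subset) (auto simp: commute)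
    moreover have "mball y (1 / Suc m) \<in> \<B>" unfolding \<B>_def using \<open>y \<in> D\<close> by force
    ultimately show ?thesis using \<open>mball x r \<subseteq> U\<close> by blast
  qed
  moreover have "countable \<B>" unfolding \<B>_def using \<open>countable D\<close> by simp
  ultimately show ?thesis unfolding second_countable_def X_eq \<B>_def by auto
qed

text \<open>A point \<open>s\<close> of \<open>S\<close> can be deleted without changing the cardinality of \<open>S\<close>, because
  \<open>topspace X - {s}\<close> is open and non-empty.\<close>
lemma ubiquitously_dense_infinite:
  assumes "t1_space X" "\<exists>x\<in>topspace X. \<exists>y\<in>topspace X. x \<noteq> y"
    and ud: "ubiquitously_dense X S" and "S \<noteq> {}"
  shows "infinite S"
proof
  assume "finite S"
  obtain s where "s \<in> S" using \<open>S \<noteq> {}\<close> by blast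
  have "openin X (topspace X - {s})"
    using \<open>t1_space X\<close> by (simp add: t1_space_openin_delete_alt)
  moreover have "topspace X - {s} \<noteq> {}" using assms(2) by blast
  ultimately have "(topspace X - {s}) \<inter> S \<approx> S"
    using ud unfolding ubiquitously_dense_def by blast
  moreover have "(topspace X - {s}) \<inter> S = S - {s}"
    using ud unfolding ubiquitously_dense_def by blast
  ultimately have "card (S - {s}) = card S"
    using \<open>finite S\<close> by (simp add: eqpoll_iff_card)
  with card_Diff1_less[OF \<open>finite S\<close> \<open>s \<in> S\<close>] show False by simp
qed

text \<open>Well-order \<open>I\<close> by its cardinal and choose recursively: at each stage fewer than
  \<open>|I|\<close> values have been taken, so \<open>B i\<close> still has a fresh one.\<close>
lemma obtain_inj_selection:
  assumes large: "\<And>i. i \<in> I \<Longrightarrow> |I| \<le>o |B i|"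
  obtains p where "inj_on p I" "\<And>i. i \<in> I \<Longrightarrow> p i \<in> B i"
proof -
  define r where "r = |I|"
  have Cr: "Card_order r" and Fr: "Field r = I" and wr: "wo_rel r"
    unfolding r_def wo_rel_def by (simp_all add: card_of_card_order_on card_of_well_order_on Field_card_of)
  define H where "H = (\<lambda>f i. SOME y. y \<in> B i \<and> y \<notin> f ` underS r i)"
  have adm: "wo_rel.adm_wo r H"
    unfolding wo_rel.adm_wo_def[OF wr] H_def by (simp cong: image_cong)
  define p where "p = wo_rel.worec r H"
  have p_rec: "p i = H p i" for i
    unfolding p_def by (metis wo_rel.worec_fixpoint[OF wr adm])
  have fresh: "\<exists>y. y \<in> B i \<and> y \<notin> p ` underS r i" if "i \<in> I" for i
  proof (rule ccontr)
    assume "\<not> ?thesis"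
    then have "|B i| \<le>o |p ` underS r i|" by (intro card_of_mono1) blast
    also have "|p ` underS r i| \<le>o |underS r i|" by (rule card_of_image)
    also have "|underS r i| <o |I|"
      using card_of_underS[OF Cr] that Fr r_def by simp
    finally show False using large[OF that] not_ordLess_ordLeq by blast
  qed
  have p_sel: "p i \<in> B i \<and> p i \<notin> p ` underS r i" if "i \<in> I" for i
    using someI_ex[OF fresh[OF that]] p_rec[of i] unfolding H_def by simp
  have "inj_on p I"
  proof (rule inj_onI)
    fix i j assume ij: "i \<in> I" "j \<in> I" "p i = p j"
    have "i = j \<or> i \<in> underS r j \<or> j \<in> underS r i"
      using wo_rel.TOTALS[OF wr] ij Fr unfolding underS_def by blast
    then show "i = j" using p_sel ij by (metis image_eqI)
  qed
  then show thesis using that p_sel by blast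
qed

lemma countable_partition_meeting_all:
  fixes S :: "'a set" and \<B> :: "'a set set"
  assumes "infinite S" "countable \<B>" and large: "\<And>B. B \<in> \<B> \<Longrightarrow> |S| \<le>o |B \<inter> S|"
  shows "\<exists>A. (\<forall>\<alpha>\<in>S. A \<alpha> \<subseteq> S \<and> countable (A \<alpha>) \<and> (\<forall>B\<in>\<B>. A \<alpha> \<inter> B \<noteq> {})) \<and>
             (\<forall>\<alpha>\<in>S. \<forall>\<beta>\<in>S. \<alpha> \<noteq> \<beta> \<longrightarrow> A \<alpha> \<inter> A \<beta> = {}) \<and>
             S = (\<Union>\<alpha>\<in>S. A \<alpha>)"
proof -
  have "|\<B>| \<le>o |UNIV :: nat set|"
    using \<open>countable \<B>\<close> unfolding countable_def card_of_ordLeq[symmetric] by blast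
  also have "|UNIV :: nat set| \<le>o |S|"
    using \<open>infinite S\<close> infinite_iff_card_of_nat by blast
  finally have "|S \<times> \<B>| \<le>o |S|"
    using card_of_Sigma_ordLeq_infinite[OF \<open>infinite S\<close> card_of_mono1[of S S], of "\<lambda>_. \<B>"]
    by simp
  with large have "|S \<times> \<B>| \<le>o |snd i \<inter> S|" if "i \<in> S \<times> \<B>" for i
    using that ordLeq_transitive by fastforce
  then obtain p where p_inj: "inj_on p (S \<times> \<B>)"
    and p_sel: "\<And>i. i \<in> S \<times> \<B> \<Longrightarrow> p i \<in> snd i \<inter> S"
    by (rule obtain_inj_selection) auto
  have p_in: "p (\<alpha>, B) \<in> B \<inter> S" if "\<alpha> \<in> S" "B \<in> \<B>" for \<alpha> B
    using p_sel[of "(\<alpha>, B)"] that by simp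
  define A where "A \<alpha> = (\<lambda>B. p (\<alpha>, B)) ` \<B> \<union> ({\<alpha>} - p ` (S \<times> \<B>))" for \<alpha>
  have pieces: "A \<alpha> \<subseteq> S \<and> countable (A \<alpha>) \<and> (\<forall>B\<in>\<B>. A \<alpha> \<inter> B \<noteq> {})" if "\<alpha> \<in> S" for \<alpha>
  proof (intro conjI ballI)
    show "A \<alpha> \<subseteq> S" using p_in that unfolding A_def by auto
    show "countable (A \<alpha>)" using \<open>countable \<B>\<close> unfolding A_def by simp
    show "A \<alpha> \<inter> B \<noteq> {}" if "B \<in> \<B>" for B
      using p_in[OF \<open>\<alpha> \<in> S\<close> that] that unfolding A_def by blast
  qed
  have disjoint: "A \<alpha> \<inter> A \<beta> = {}" if "\<alpha> \<in> S" "\<beta> \<in> S" "\<alpha> \<noteq> \<beta>" for \<alpha> \<beta>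
  proof (rule equals0I)
    fix z assume z: "z \<in> A \<alpha> \<inter> A \<beta>"
    show False
    proof (cases "z \<in> p ` (S \<times> \<B>)")
      case True
      with z obtain B B' where "B \<in> \<B>" "B' \<in> \<B>" "p (\<alpha>, B) = p (\<beta>, B')"
        unfolding A_def by auto
      with inj_onD[OF p_inj] \<open>\<alpha> \<in> S\<close> \<open>\<beta> \<in> S\<close> \<open>\<alpha> \<noteq> \<beta>\<close> show False by blast
    next
      case False
      with z \<open>\<alpha> \<in> S\<close> \<open>\<beta> \<in> S\<close> have "z = \<alpha>" "z = \<beta>" unfolding A_def by auto
      with \<open>\<alpha> \<noteq> \<beta>\<close> show False by simp
    qed
  qed
  have covers: "S \<subseteq> (\<Union>\<alpha>\<in>S. A \<alpha>)"
  proof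
    fix s assume "s \<in> S"
    show "s \<in> (\<Union>\<alpha>\<in>S. A \<alpha>)"
    proof (cases "s \<in> p ` (S \<times> \<B>)")
      case True
      then show ?thesis unfolding A_def by blast
    next
      case False
      with \<open>s \<in> S\<close> show ?thesis unfolding A_def by blast
    qed
  qed
  have "S = (\<Union>\<alpha>\<in>S. A \<alpha>)"
    using pieces covers by (intro subset_antisym) auto
  with pieces disjoint show ?thesis by (intro exI[of _ A]) simp
qed

lemma ubiquitously_dense_partition_countable_dense:
  assumes "second_countable X" "t1_space X" "\<exists>x\<in>topspace X. \<exists>y\<in>topspace X. x \<noteq> y"
    and ud: "ubiquitously_dense X S"
  shows "\<exists>A. (\<forall>\<alpha>\<in>S. A \<alpha> \<subseteq> S \<and> countable (A \<alpha>) \<and> X closure_of A \<alpha> = topspace X) \<and>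
             (\<forall>\<alpha>\<in>S. \<forall>\<beta>\<in>S. \<alpha> \<noteq> \<beta> \<longrightarrow> A \<alpha> \<inter> A \<beta> = {}) \<and>
             S = (\<Union>\<alpha>\<in>S. A \<alpha>)"
proof (cases "S = {}")
  case False
  with assms have "infinite S" by (intro ubiquitously_dense_infinite)
  obtain \<B> where "countable \<B>" and \<B>_open: "\<And>V. V \<in> \<B> \<Longrightarrow> openin X V"
    and \<B>_base: "\<And>U x. openin X U \<Longrightarrow> x \<in> U \<Longrightarrow> \<exists>V\<in>\<B>. x \<in> V \<and> V \<subseteq> U"
    using \<open>second_countable X\<close> unfolding second_countable_def by metis
  have "|S| \<le>o |V \<inter> S|" if "V \<in> \<B> - {{}}" for V
    using ud \<B>_open that ordIso_iff_ordLeq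
    unfolding ubiquitously_dense_def eqpoll_iff_card_of_ordIso by blast
  with countable_partition_meeting_all[OF \<open>infinite S\<close>] \<open>countable \<B>\<close>
  obtain A where pieces: "\<forall>\<alpha>\<in>S. A \<alpha> \<subseteq> S \<and> countable (A \<alpha>) \<and> (\<forall>V\<in>\<B> - {{}}. A \<alpha> \<inter> V \<noteq> {})"
    and disjoint: "\<forall>\<alpha>\<in>S. \<forall>\<beta>\<in>S. \<alpha> \<noteq> \<beta> \<longrightarrow> A \<alpha> \<inter> A \<beta> = {}"
    and covers: "S = (\<Union>\<alpha>\<in>S. A \<alpha>)"
    by (metis countable_Diff)
  have "X closure_of A \<alpha> = topspace X" if "\<alpha> \<in> S" for \<alpha>
    unfolding dense_intersects_open
  proof (intro allI impI)
    fix U assume "openin X U \<and> U \<noteq> {}"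
    then obtain V where "V \<in> \<B> - {{}}" "V \<subseteq> U" using \<B>_base by blast
    then show "A \<alpha> \<inter> U \<noteq> {}" using pieces that by blast
  qed
  with pieces disjoint covers show ?thesis by (intro exI[of _ A]) simp
qed simp

theorem theorem2p3:
  fixes X :: "'a topology" and S :: "'a set"
  assumes "separable_space X" and "metrizable_space X"
    and "\<exists>x\<in>topspace X. \<exists>y\<in>topspace X. x \<noteq> y"
    and "ubiquitously_dense X S"
  shows "\<exists>A :: 'a \<Rightarrow> 'a set.
           (\<forall>\<alpha>\<in>Field (card_of S). A \<alpha> \<subseteq> topspace X) \<and>
           (\<forall>\<alpha>\<in>Field (card_of S). countable (A \<alpha>)) \<and>
           (\<forall>\<alpha>\<in>Field (card_of S). X closure_of (A \<alpha>) = topspace X) \<and>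
           (\<forall>\<alpha>\<in>Field (card_of S). \<forall>\<beta>\<in>Field (card_of S). \<alpha> \<noteq> \<beta> \<longrightarrow> A \<alpha> \<inter> A \<beta> = {}) \<and>
           S = (\<Union>\<alpha>\<in>Field (card_of S). A \<alpha>)"
proof -
  have "S \<subseteq> topspace X" using assms(4) unfolding ubiquitously_dense_def by blast
  obtain A where pieces: "\<forall>\<alpha>\<in>S. A \<alpha> \<subseteq> S \<and> countable (A \<alpha>) \<and> X closure_of A \<alpha> = topspace X"
    and disjoint: "\<forall>\<alpha>\<in>S. \<forall>\<beta>\<in>S. \<alpha> \<noteq> \<beta> \<longrightarrow> A \<alpha> \<inter> A \<beta> = {}"
    and covers: "S = (\<Union>\<alpha>\<in>S. A \<alpha>)"
    using ubiquitously_dense_partition_countable_dense[OF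
        separable_metrizable_imp_second_countable[OF assms(1,2)]
        metrizable_imp_t1_space[OF assms(2)] assms(3,4)]
    by (elim exE conjE) (rule that)
  show ?thesis unfolding Field_card_of
  proof (intro exI[of _ A] conjI)
    show "\<forall>\<alpha>\<in>S. A \<alpha> \<subseteq> topspace X" using pieces \<open>S \<subseteq> topspace X\<close> by blast
  qed (use pieces disjoint covers in blast)+
qed

end
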